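(* Let $\Lambda\in(\mathbb{R}\setminus\{0\})^n$ and let $h$ be a real-valued function in $C^{1,1}_{\mathrm{loc}}(\mathbb{C}^n)$, and set $P=2\mathbf{i}\,\partial h/\partial\bar z$. Then the limit $$\langle h\rangle(a)=\lim_{T\to\pm\infty}\frac{1}{|T|}\int_0^T h(\Phi_{-\Lambda t}a)\,dt$$ exists for all $a\in\mathbb{C}^n$, $\langle h\rangle\in C^{1,1}_{\mathrm{loc}}(\mathbb{C}^n)$, and for every $1\le j\le n$, $$2\mathbf{i}\frac{\partial}{\partial\bar a_j}\langle h\rangle(a)=\langle\langle P\rangle\rangle_j(a).$$ That is, the effective equation $\partial_\tau a=\langle\langle P\rangle\rangle(a)$ is Hamiltonian with Hamiltonian $\langle h\rangle$.
   Context: $C^{1,1}_{\mathrm{loc}}(\mathbb{C}^n)=\{u\in C^1(\mathbb{C}^n): u_z,u_{\bar z}\text{ are locally Lipschitz}\}$. $\partial/\partial\bar z_j=\frac12(\partial_{x_j}+\mathbf{i}\partial_{y_j})$ for $z_j=x_j+\mathbf{i}y_j$. $\Phi_w=\mathrm{diag}(e^{\mathbf{i}w_1},\dots,e^{\mathbf{i}w_n})$. $\langle\langle P\rangle\rangle(a)=\lim_{T\to\pm\infty}\frac1{|T|}\int_0^T\Phi_{\Lambda t}P(\Phi_{-\Lambda t}a)\,dt$ (for $T<0$, $\int_0^T$ means $\int_T^0$). *)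

theory Defs
  imports "HOL-Analysis.Analysis"
begin

text \<open>C^n is modelled as complex ^ 'n (an arbitrary finite index type).
  Real partial derivatives along x_j and y_j are taken from the (real) Frechet derivative.\<close>

definition dx :: "(complex^'n \<Rightarrow> complex) \<Rightarrow> 'n \<Rightarrow> complex^'n \<Rightarrow> complex" where
  "dx u j a = frechet_derivative u (at a) (axis j 1)"

definition dy :: "(complex^'n \<Rightarrow> complex) \<Rightarrow> 'n \<Rightarrow> complex^'n \<Rightarrow> complex" where
  "dy u j a = frechet_derivative u (at a) (axis j \<i>)"

definition dz :: "(complex^'n \<Rightarrow> complex) \<Rightarrow> 'n \<Rightarrow> complex^'n \<Rightarrow> complex" where
  "dz u j a = (dx u j a - \<i> * dy u j a) / 2"

definition dzbar :: "(complex^'n \<Rightarrow> complex) \<Rightarrow> 'n \<Rightarrow> complex^'n \<Rightarrow> complex" where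
  "dzbar u j a = (dx u j a + \<i> * dy u j a) / 2"

definition locally_lipschitz :: "('a::metric_space \<Rightarrow> 'b::metric_space) \<Rightarrow> bool" where
  "locally_lipschitz f \<longleftrightarrow> (\<forall>K. compact K \<longrightarrow> (\<exists>L. L-lipschitz_on K f))"

definition C1 :: "(complex^'n \<Rightarrow> complex) \<Rightarrow> bool" where
  "C1 u \<longleftrightarrow> (\<exists>D :: (complex^'n) \<Rightarrow> ((complex^'n) \<Rightarrow>\<^sub>L complex).
      (\<forall>a. (u has_derivative blinfun_apply (D a)) (at a)) \<and> continuous_on UNIV D)"

definition C11loc :: "(complex^'n \<Rightarrow> complex) \<Rightarrow> bool" where
  "C11loc u \<longleftrightarrow> C1 u \<and> (\<forall>j. locally_lipschitz (dz u j) \<and> locally_lipschitz (dzbar u j))"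

definition Phi :: "real^'n \<Rightarrow> complex^'n \<Rightarrow> complex^'n" where
  "Phi w a = (\<chi> j. exp (\<i> * of_real (w $ j)) * a $ j)"

text \<open>time_avg f L: (1/|T|) int_0^T f(t) dt \<longrightarrow> L both as T \<rightarrow> +\<infinity> and T \<rightarrow> -\<infinity>
  (for T < 0 the integral int_0^T means int_T^0).\<close>
definition time_avg :: "(real \<Rightarrow> 'a::euclidean_space) \<Rightarrow> 'a \<Rightarrow> bool" where
  "time_avg f L \<longleftrightarrow>
     ((\<lambda>T. (1 / \<bar>T\<bar>) *\<^sub>R integral {0..T} f) \<longlongrightarrow> L) at_top \<and>
     ((\<lambda>T. (1 / \<bar>T\<bar>) *\<^sub>R integral {T..0} f) \<longlongrightarrow> L) at_bot"

end

theory Submission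
  imports Defs
begin

text \<open>
  Along the flow \<open>t \<mapsto> Phi (- t \<Lambda>) a\<close> every coordinate is a trigonometric polynomial in \<open>t\<close>,
  hence so is every polynomial in the real coordinates, and trigonometric polynomials have time
  averages because only the zero frequency survives averaging. By Stone-Weierstrass on the compact
  closure of the orbit, every continuous function along the flow, and likewise the conjugated field
  \<open>Phi (t \<Lambda>) (\<partial>h/\<partial>z\<^sup>- (Phi (- t \<Lambda>) a))\<close>, is a uniform limit of trigonometric polynomials and
  so has a time average.

  For real \<open>h\<close> the differential is \<open>v \<mapsto> 2 \<langle>\<partial>h/\<partial>z\<^sup>-, v\<rangle>\<close>, with the real inner product of
  \<open>\<complex>\<^sup>n = \<real>\<^sup>2\<^sup>n\<close>. Since \<open>Phi\<close> is unitary, the differential at \<open>Phi (- t \<Lambda>) a\<close> applied to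
  \<open>Phi (- t \<Lambda>) v\<close> is \<open>2 \<langle>Phi (t \<Lambda>) (\<partial>h/\<partial>z\<^sup>- (Phi (- t \<Lambda>) a)), v\<rangle>\<close>, and as \<open>\<partial>h/\<partial>z\<^sup>-\<close> is locally
  Lipschitz, the Taylor remainder of \<open>h\<close> along the orbit is \<open>O(|v|\<^sup>2)\<close> uniformly in \<open>t\<close>. Averaging
  in \<open>t\<close> shows that \<open>\<langle>h\<rangle>\<close> is differentiable with \<open>\<partial>\<langle>h\<rangle>/\<partial>a\<^sup>- = \<langle>\<langle>\<partial>h/\<partial>z\<^sup>-\<rangle>\<rangle>\<close>, which is locally
  Lipschitz as an average of equi-Lipschitz maps.
\<close>

section \<open>Time averages\<close>

definition running_avg :: "(real \<Rightarrow> 'a::real_normed_vector) \<Rightarrow> real \<Rightarrow> 'a" where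
  "running_avg F T = (1 / \<bar>T\<bar>) *\<^sub>R integral {min 0 T..max 0 T} F"

lemma time_avg_iff_running_avg: "time_avg F L \<longleftrightarrow> (running_avg F \<longlongrightarrow> L) at_infinity"
proof -
  have "\<forall>\<^sub>F T in at_top. (1 / \<bar>T\<bar>) *\<^sub>R integral {0..T} F = running_avg F T"
    using eventually_gt_at_top[of 0] by eventually_elim (simp add: running_avg_def)
  moreover have "\<forall>\<^sub>F T in at_bot. (1 / \<bar>T\<bar>) *\<^sub>R integral {T..0} F = running_avg F T"
    using eventually_gt_at_bot[of 0] by eventually_elim (simp add: running_avg_def)
  ultimately show ?thesis
    unfolding time_avg_def at_infinity_eq_at_top_bot filterlim_def filtermap_sup le_sup_iff
    by (simp add: filterlim_def[symmetric] tendsto_cong)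
qed

lemma integrable_on_interval_if_continuous:
  fixes F :: "real \<Rightarrow> 'a::banach"
  assumes "continuous_on UNIV F"
  shows "F integrable_on {a..b}"
  using assms by (auto intro: integrable_continuous_real continuous_on_subset)

lemma running_avg_bounded_linear:
  fixes F :: "real \<Rightarrow> 'a::banach"
  assumes "bounded_linear B" "continuous_on UNIV F"
  shows "running_avg (\<lambda>t. B (F t)) T = B (running_avg F T)"
proof -
  have "F integrable_on {a..b}" for a b
    using assms by (auto intro: integrable_on_interval_if_continuous)
  from integral_linear[OF this assms(1)] show ?thesis
    using assms(1) by (simp add: running_avg_def o_def linear_simps)
qed

lemma running_avg_add:
  fixes F G :: "real \<Rightarrow> 'a::banach"
  assumes "continuous_on UNIV F" "continuous_on UNIV G"
  shows "running_avg (\<lambda>t. F t + G t) T = running_avg F T + running_avg G T"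
proof -
  have "F integrable_on {a..b}" "G integrable_on {a..b}" for a b
    using assms by (auto intro: integrable_on_interval_if_continuous)
  then show ?thesis by (simp add: running_avg_def integral_add scaleR_add_right)
qed

lemma running_avg_diff:
  fixes F G :: "real \<Rightarrow> 'a::banach"
  assumes "continuous_on UNIV F" "continuous_on UNIV G"
  shows "running_avg (\<lambda>t. F t - G t) T = running_avg F T - running_avg G T"
proof -
  have "F integrable_on {a..b}" "G integrable_on {a..b}" for a b
    using assms by (auto intro: integrable_on_interval_if_continuous)
  then show ?thesis by (simp add: running_avg_def integral_diff scaleR_diff_right)
qed

lemma norm_running_avg_le:
  fixes F :: "real \<Rightarrow> 'a::banach"
  assumes "continuous_on UNIV F" "\<And>t. norm (F t) \<le> B" "T \<noteq> 0"
  shows "norm (running_avg F T) \<le> B"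
proof -
  have "norm (integral {min 0 T..max 0 T} F) \<le> B * (max 0 T - min 0 T)"
    using assms(2) by (intro integral_bound continuous_on_subset[OF assms(1)]) auto
  also have "max 0 T - min 0 T = \<bar>T\<bar>" by linarith
  finally show ?thesis
    using assms(3) by (simp add: running_avg_def field_simps)
qed

lemma time_avg_bounded_linear:
  fixes F :: "real \<Rightarrow> 'a::euclidean_space" and B :: "'a \<Rightarrow> 'b::euclidean_space"
  assumes "time_avg F L" "continuous_on UNIV F" "bounded_linear B"
  shows "time_avg (\<lambda>t. B (F t)) (B L)"
  using assms(1) unfolding time_avg_iff_running_avg running_avg_bounded_linear[OF assms(3,2)]
  by (rule bounded_linear.tendsto[OF assms(3)])

lemma time_avg_add:
  fixes F G :: "real \<Rightarrow> 'a::euclidean_space"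
  assumes "time_avg F L" "time_avg G K" "continuous_on UNIV F" "continuous_on UNIV G"
  shows "time_avg (\<lambda>t. F t + G t) (L + K)"
  using assms(1,2) unfolding time_avg_iff_running_avg running_avg_add[OF assms(3,4)]
  by (rule tendsto_add)

lemma time_avg_diff:
  fixes F G :: "real \<Rightarrow> 'a::euclidean_space"
  assumes "time_avg F L" "time_avg G K" "continuous_on UNIV F" "continuous_on UNIV G"
  shows "time_avg (\<lambda>t. F t - G t) (L - K)"
  using assms(1,2) unfolding time_avg_iff_running_avg running_avg_diff[OF assms(3,4)]
  by (rule tendsto_diff)

lemma time_avg_sum:
  fixes F :: "'i \<Rightarrow> real \<Rightarrow> 'a::euclidean_space"
  assumes "finite I" "\<And>i. i \<in> I \<Longrightarrow> time_avg (F i) (L i)"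
    and "\<And>i. i \<in> I \<Longrightarrow> continuous_on UNIV (F i)"
  shows "time_avg (\<lambda>t. \<Sum>i\<in>I. F i t) (\<Sum>i\<in>I. L i)"
  using assms
proof (induction I rule: finite_induct)
  case empty
  have "running_avg (\<lambda>t. 0 :: 'a) = (\<lambda>T. 0)" by (simp add: running_avg_def fun_eq_iff)
  then show ?case by (simp add: time_avg_iff_running_avg)
next
  case (insert i I)
  have "time_avg (\<lambda>t. F i t + (\<Sum>i\<in>I. F i t)) (L i + (\<Sum>i\<in>I. L i))"
    using insert by (intro time_avg_add continuous_on_sum) auto
  then show ?case using insert.hyps by simp
qed

lemma time_avg_norm_le:
  fixes F :: "real \<Rightarrow> 'a::euclidean_space"
  assumes "time_avg F L" "continuous_on UNIV F" "\<And>t. norm (F t) \<le> B"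
  shows "norm L \<le> B"
proof (rule Lim_norm_ubound)
  show "(running_avg F \<longlongrightarrow> L) at_infinity"
    using assms(1) by (simp add: time_avg_iff_running_avg)
  show "\<forall>\<^sub>F T in at_infinity. norm (running_avg F T) \<le> B"
    unfolding eventually_at_infinity
    by (intro exI[of _ 1] allI impI norm_running_avg_le[OF assms(2,3)]) auto
qed (simp add: at_infinity_eq_at_top_bot)

lemma time_avg_vec:
  fixes F :: "real \<Rightarrow> 'a::euclidean_space ^ 'n"
  assumes "\<And>j. time_avg (\<lambda>t. F t $ j) (L $ j)" "continuous_on UNIV F"
  shows "time_avg F L"
  unfolding time_avg_iff_running_avg
proof (rule vec_tendstoI)
  fix j
  have "(\<lambda>T. running_avg F T $ j) = running_avg (\<lambda>t. F t $ j)"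
    using running_avg_bounded_linear[OF bounded_linear_vec_nth assms(2)] by auto
  then show "((\<lambda>T. running_avg F T $ j) \<longlongrightarrow> L $ j) at_infinity"
    using assms(1)[of j] by (simp add: time_avg_iff_running_avg)
qed

lemma time_avg_vec_mult_left:
  fixes F :: "real \<Rightarrow> complex ^ 'n"
  assumes "time_avg F L" "continuous_on UNIV F"
  shows "time_avg (\<lambda>t. \<chi> j. c * F t $ j) (\<chi> j. c * L $ j)"
proof (rule time_avg_vec)
  have bl: "bounded_linear (\<lambda>m :: complex ^ 'n. c * m $ j)" for j
    by (rule bounded_linear_compose[OF bounded_linear_mult_right bounded_linear_vec_nth])
  show "time_avg (\<lambda>t. (\<chi> j. c * F t $ j) $ j) ((\<chi> j. c * L $ j) $ j)" for j
    using time_avg_bounded_linear[OF assms bl[of j]] by simp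
  show "continuous_on UNIV (\<lambda>t. \<chi> j. c * F t $ j)"
    by (intro continuous_on_vec_lambda continuous_intros assms(2))
qed

lemma Cauchy_time_avg_uniform_approx:
  fixes F :: "nat \<Rightarrow> real \<Rightarrow> 'a::euclidean_space"
  assumes F: "\<And>k. continuous_on UNIV (F k)" "\<And>k. time_avg (F k) (L k)"
    and approx: "\<And>k t. norm (F k t - H t) \<le> inverse (real (Suc k))"
  shows "Cauchy L"
proof (rule metric_CauchyI)
  fix e :: real assume "e > 0"
  then obtain N where N: "inverse (real (Suc N)) < e / 2"
    using reals_Archimedean[of "e / 2"] by auto
  have "dist (L m) (L n) < e" if "N \<le> m" "N \<le> n" for m n
  proof -
    have "norm (F m t - F n t) \<le> inverse (real (Suc N)) + inverse (real (Suc N))" for t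
    proof -
      have "norm (F m t - F n t) \<le> norm (F m t - H t) + norm (F n t - H t)"
        using norm_triangle_ineq4[of "F m t - H t" "F n t - H t"] by simp
      moreover have "inverse (real (Suc m)) \<le> inverse (real (Suc N))"
        "inverse (real (Suc n)) \<le> inverse (real (Suc N))"
        using that by (auto intro!: le_imp_inverse_le)
      ultimately show ?thesis using approx[of m t] approx[of n t] by linarith
    qed
    then have "dist (L m) (L n) \<le> inverse (real (Suc N)) + inverse (real (Suc N))"
      unfolding dist_norm
      by (intro time_avg_norm_le[OF time_avg_diff[OF F(2) F(2) F(1) F(1)]] continuous_on_diff F(1))
    then show ?thesis using N by linarith
  qed
  then show "\<exists>M. \<forall>m\<ge>M. \<forall>n\<ge>M. dist (L m) (L n) < e" by blast
qed

lemma time_avg_uniform_limit: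
  fixes F :: "nat \<Rightarrow> real \<Rightarrow> 'a::euclidean_space"
  assumes F: "\<And>k. continuous_on UNIV (F k)" "\<And>k. time_avg (F k) (L k)"
    and H: "continuous_on UNIV H" and approx: "\<And>k t. norm (F k t - H t) \<le> inverse (real (Suc k))"
    and "L \<longlonglongrightarrow> l"
  shows "time_avg H l"
proof -
  have unif: "uniform_limit (- {0}) (\<lambda>k. running_avg (F k)) (running_avg H) sequentially"
    unfolding uniform_limit_iff
  proof (intro allI impI)
    fix e :: real assume "e > 0"
    then have "\<forall>\<^sub>F k in sequentially. inverse (real (Suc k)) < e"
      by (rule order_tendstoD(2)[OF LIMSEQ_inverse_real_of_nat])
    then show "\<forall>\<^sub>F k in sequentially. \<forall>T\<in>- {0}. dist (running_avg (F k) T) (running_avg H T) < e"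
    proof eventually_elim
      case (elim k)
      show ?case
      proof
        fix T :: real assume "T \<in> - {0}"
        then have "norm (running_avg (\<lambda>t. F k t - H t) T) \<le> inverse (real (Suc k))"
          using approx by (intro norm_running_avg_le continuous_on_diff F(1) H) auto
        then show "dist (running_avg (F k) T) (running_avg H T) < e"
          using elim by (simp add: dist_norm running_avg_diff[OF F(1) H])
      qed
    qed
  qed
  have "(running_avg H \<longlongrightarrow> l) at_infinity"
  proof (rule swap_uniform_limit'[OF _ \<open>L \<longlonglongrightarrow> l\<close> unif])
    show "\<forall>\<^sub>F k in sequentially. (running_avg (F k) \<longlongrightarrow> L k) at_infinity"
      using F(2) by (simp add: time_avg_iff_running_avg)
    show "\<forall>\<^sub>F T in at_infinity. T \<in> - {0}"
      unfolding eventually_at_infinity by (intro exI[of _ 1]) auto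
  qed simp_all
  then show ?thesis unfolding time_avg_iff_running_avg .
qed

lemma time_avg_uniform_approx:
  fixes H :: "real \<Rightarrow> 'a::euclidean_space"
  assumes "continuous_on UNIV H"
    and "\<And>e. e > 0 \<Longrightarrow>
      \<exists>F L. continuous_on UNIV F \<and> time_avg F L \<and> (\<forall>t. norm (F t - H t) \<le> e)"
  shows "\<exists>L. time_avg H L"
proof -
  have "\<forall>k. \<exists>F L. continuous_on UNIV F \<and> time_avg F L \<and>
      (\<forall>t. norm (F t - H t) \<le> inverse (real (Suc k)))"
    using assms(2) by simp
  then obtain F L where F: "\<And>k. continuous_on UNIV (F k)" "\<And>k. time_avg (F k) (L k)"
    and approx: "\<And>k t. norm (F k t - H t) \<le> inverse (real (Suc k))"
    by metis
  obtain l where "L \<longlonglongrightarrow> l"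
    using Cauchy_time_avg_uniform_approx[OF F approx]
    by (auto simp: Cauchy_convergent_iff convergent_def)
  then show ?thesis
    using time_avg_uniform_limit[OF F assms(1) approx] by blast
qed

section \<open>Trigonometric polynomials\<close>

lemma has_vector_derivative_cis_scaled:
  assumes "w \<noteq> 0"
  shows "((\<lambda>t. cis (w * t) / (\<i> * w)) has_vector_derivative cis (w * t)) (at t within S)"
proof -
  have "((\<lambda>z. exp (\<i> * w * z) / (\<i> * w)) has_field_derivative exp (\<i> * w * t)) (at (of_real t))"
    using assms by (auto intro!: derivative_eq_intros)
  from has_vector_derivative_real_field[OF this] show ?thesis
    by (simp add: cis_conv_exp mult.assoc)
qed

lemma norm_integral_cis_le:
  assumes "w \<noteq> 0" "a \<le> b"
  shows "norm (integral {a..b} (\<lambda>t. cis (w * t))) \<le> 2 / \<bar>w\<bar>"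
proof -
  have "((\<lambda>t. cis (w * t)) has_integral cis (w * b) / (\<i> * w) - cis (w * a) / (\<i> * w)) {a..b}"
    using assms by (intro fundamental_theorem_of_calculus has_vector_derivative_cis_scaled) auto
  then have "integral {a..b} (\<lambda>t. cis (w * t)) = cis (w * b) / (\<i> * w) - cis (w * a) / (\<i> * w)"
    by (rule integral_unique)
  also have "norm \<dots> \<le> norm (cis (w * b) / (\<i> * w)) + norm (cis (w * a) / (\<i> * w))"
    by (rule norm_triangle_ineq4)
  also have "\<dots> = 2 / \<bar>w\<bar>" by (simp add: norm_divide norm_mult)
  finally show ?thesis .
qed

lemma time_avg_cis: "time_avg (\<lambda>t. cis (w * t)) (if w = 0 then 1 else 0)"
  unfolding time_avg_iff_running_avg
proof (cases "w = 0")
  case True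
  have "\<forall>\<^sub>F T in at_infinity. 1 = running_avg (\<lambda>t. cis (w * t)) T"
    unfolding eventually_at_infinity
    by (intro exI[of _ 1]) (auto simp: True running_avg_def max_def min_def)
  then show "(running_avg (\<lambda>t. cis (w * t)) \<longlongrightarrow> (if w = 0 then 1 else 0)) at_infinity"
    using True by (simp add: tendsto_eventually)
next
  case False
  have "\<forall>\<^sub>F T in at_infinity. norm (running_avg (\<lambda>t. cis (w * t)) T) \<le> 2 / \<bar>w\<bar> * norm (inverse T)"
    unfolding eventually_at_infinity
  proof (intro exI[of _ 1] allI impI)
    fix T :: real assume "1 \<le> norm T"
    then have "norm (integral {min 0 T..max 0 T} (\<lambda>t. cis (w * t))) / \<bar>T\<bar> \<le> 2 / \<bar>w\<bar> / \<bar>T\<bar>"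
      using False by (intro divide_right_mono norm_integral_cis_le) auto
    then show "norm (running_avg (\<lambda>t. cis (w * t)) T) \<le> 2 / \<bar>w\<bar> * norm (inverse T)"
      by (simp add: running_avg_def field_simps)
  qed
  moreover have "((\<lambda>T. 2 / \<bar>w\<bar> * norm (inverse T :: real)) \<longlongrightarrow> 0) at_infinity"
    by (intro tendsto_mult_right_zero tendsto_norm_zero tendsto_inverse_0)
  ultimately show "(running_avg (\<lambda>t. cis (w * t)) \<longlongrightarrow> (if w = 0 then 1 else 0)) at_infinity"
    using False by (simp add: Lim_null_comparison)
qed

definition trig_polynomial :: "(real \<Rightarrow> complex) \<Rightarrow> bool" where
  "trig_polynomial \<phi> \<longleftrightarrow> (\<exists>W c. finite W \<and> \<phi> = (\<lambda>t. \<Sum>w\<in>W. c w * cis (w * t)))"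

lemma trig_polynomial_cis: "trig_polynomial (\<lambda>t. cis (w * t))"
  unfolding trig_polynomial_def by (intro exI[of _ "{w}"] exI[of _ "\<lambda>_. 1"]) simp

lemma trig_polynomial_const: "trig_polynomial (\<lambda>t. c)"
  unfolding trig_polynomial_def by (intro exI[of _ "{0}"] exI[of _ "\<lambda>_. c"]) simp

lemma trig_polynomial_add:
  assumes "trig_polynomial \<phi>" "trig_polynomial \<psi>"
  shows "trig_polynomial (\<lambda>t. \<phi> t + \<psi> t)"
proof -
  obtain W c where W: "finite W" and \<phi>: "\<phi> = (\<lambda>t. \<Sum>w\<in>W. c w * cis (w * t))"
    using assms(1) unfolding trig_polynomial_def by blast
  obtain V d where V: "finite V" and \<psi>: "\<psi> = (\<lambda>t. \<Sum>w\<in>V. d w * cis (w * t))"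
    using assms(2) unfolding trig_polynomial_def by blast
  define e where "e w = (if w \<in> W then c w else 0) + (if w \<in> V then d w else 0)" for w
  have "\<phi> t + \<psi> t = (\<Sum>w\<in>W \<union> V. e w * cis (w * t))" for t
  proof -
    have "(\<Sum>w\<in>W \<union> V. e w * cis (w * t)) =
        (\<Sum>w\<in>W \<union> V. if w \<in> W then c w * cis (w * t) else 0) +
        (\<Sum>w\<in>W \<union> V. if w \<in> V then d w * cis (w * t) else 0)"
      unfolding e_def sum.distrib[symmetric] by (intro sum.cong) (auto simp: distrib_right)
    also have "\<dots> = \<phi> t + \<psi> t"
      using W V by (simp add: sum.inter_restrict[symmetric] Int_absorb1 Int_absorb2 \<phi> \<psi>)
    finally show ?thesis by simp
  qed
  then show ?thesis
    unfolding trig_polynomial_def using W V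
    by (intro exI[of _ "W \<union> V"] exI[of _ e]) (simp add: fun_eq_iff)
qed

lemma trig_polynomial_mult:
  assumes "trig_polynomial \<phi>" "trig_polynomial \<psi>"
  shows "trig_polynomial (\<lambda>t. \<phi> t * \<psi> t)"
proof -
  obtain W c where W: "finite W" and \<phi>: "\<phi> = (\<lambda>t. \<Sum>w\<in>W. c w * cis (w * t))"
    using assms(1) unfolding trig_polynomial_def by blast
  obtain V d where V: "finite V" and \<psi>: "\<psi> = (\<lambda>t. \<Sum>w\<in>V. d w * cis (w * t))"
    using assms(2) unfolding trig_polynomial_def by blast
  define U where "U = (\<lambda>(v, w). v + w) ` (W \<times> V)"
  define e where "e u = (\<Sum>(v, w)\<in>{p \<in> W \<times> V. fst p + snd p = u}. c v * d w)" for u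
  have fin: "finite (W \<times> V)" "finite U" using W V unfolding U_def by auto
  have "\<phi> t * \<psi> t = (\<Sum>u\<in>U. e u * cis (u * t))" for t
  proof -
    have "\<phi> t * \<psi> t = (\<Sum>(v, w)\<in>W \<times> V. c v * d w * cis ((v + w) * t))"
      unfolding \<phi> \<psi> sum_product sum.cartesian_product
      by (intro sum.cong) (auto simp: cis_mult distrib_right)
    also have "\<dots> = (\<Sum>u\<in>U. \<Sum>(v, w)\<in>{p \<in> W \<times> V. fst p + snd p = u}. c v * d w * cis ((v + w) * t))"
      using fin by (intro sum.group[symmetric]) (auto simp: U_def case_prod_beta)
    also have "\<dots> = (\<Sum>u\<in>U. e u * cis (u * t))"
      unfolding e_def sum_distrib_right by (intro sum.cong) auto
    finally show ?thesis .
  qed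
  then show ?thesis
    unfolding trig_polynomial_def using fin
    by (intro exI[of _ U] exI[of _ e]) (simp add: fun_eq_iff)
qed

lemma trig_polynomial_cnj:
  assumes "trig_polynomial \<phi>"
  shows "trig_polynomial (\<lambda>t. cnj (\<phi> t))"
proof -
  obtain W c where W: "finite W" and \<phi>: "\<phi> = (\<lambda>t. \<Sum>w\<in>W. c w * cis (w * t))"
    using assms unfolding trig_polynomial_def by blast
  have "cnj (\<phi> t) = (\<Sum>w\<in>uminus ` W. cnj (c (- w)) * cis (w * t))" for t
    unfolding \<phi> by (simp add: sum.reindex cis_cnj)
  then show ?thesis
    unfolding trig_polynomial_def using W
    by (intro exI[of _ "uminus ` W"] exI[of _ "\<lambda>w. cnj (c (- w))"]) (simp add: fun_eq_iff)
qed

lemma trig_polynomial_sum: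
  assumes "finite I" "\<And>i. i \<in> I \<Longrightarrow> trig_polynomial (\<phi> i)"
  shows "trig_polynomial (\<lambda>t. \<Sum>i\<in>I. \<phi> i t)"
  using assms
  by (induction I rule: finite_induct) (simp_all add: trig_polynomial_const trig_polynomial_add)

lemma trig_polynomial_Re:
  assumes "trig_polynomial \<phi>"
  shows "trig_polynomial (\<lambda>t. of_real (Re (\<phi> t)))"
proof -
  have "trig_polynomial (\<lambda>t. (\<phi> t + cnj (\<phi> t)) * (1 / 2))"
    by (intro trig_polynomial_mult trig_polynomial_add trig_polynomial_cnj assms
        trig_polynomial_const)
  then show ?thesis by (simp add: complex_add_cnj)
qed

lemma time_avg_trig_polynomial:
  assumes "trig_polynomial \<phi>"
  shows "\<exists>L. time_avg \<phi> L"
proof -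
  obtain W c where W: "finite W" and \<phi>: "\<phi> = (\<lambda>t. \<Sum>w\<in>W. c w * cis (w * t))"
    using assms unfolding trig_polynomial_def by blast
  have "time_avg (\<lambda>t. c w * cis (w * t)) (c w * (if w = 0 then 1 else 0))" for w
    by (intro time_avg_bounded_linear[OF time_avg_cis] bounded_linear_mult_right continuous_intros)
  then have "time_avg \<phi> (\<Sum>w\<in>W. c w * (if w = 0 then 1 else 0))"
    unfolding \<phi> by (intro time_avg_sum[OF W] continuous_intros)
  then show ?thesis ..
qed

lemma continuous_on_trig_polynomial:
  assumes "trig_polynomial \<phi>"
  shows "continuous_on S \<phi>"
  using assms unfolding trig_polynomial_def by (auto intro!: continuous_intros)

lemma trig_polynomial_inner:
  fixes x :: "real \<Rightarrow> complex ^ 'n"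
  assumes "\<And>j. trig_polynomial (\<lambda>t. x t $ j)"
  shows "trig_polynomial (\<lambda>t. of_real (x t \<bullet> v))"
proof -
  have expand: "(\<lambda>t. of_real (x t \<bullet> v) :: complex) =
      (\<lambda>t. \<Sum>j\<in>UNIV. of_real (Re (cnj (v $ j) * x t $ j)))"
    by (simp add: fun_eq_iff inner_vec_def inner_complex_def mult.commute)
  show ?thesis
    unfolding expand
    by (intro trig_polynomial_sum trig_polynomial_Re trig_polynomial_mult trig_polynomial_const
        assms) simp
qed

lemma trig_polynomial_real_polynomial_function:
  fixes x :: "real \<Rightarrow> complex ^ 'n"
  assumes "real_polynomial_function p" "\<And>j. trig_polynomial (\<lambda>t. x t $ j)"
  shows "trig_polynomial (\<lambda>t. of_real (p (x t)))"
  using assms(1)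
proof (induction p)
  case (linear f)
  have "of_real (f z) = (\<Sum>b\<in>Basis. of_real (z \<bullet> b) * of_real (f b) :: complex)" for z
  proof -
    have "f z = f (\<Sum>b\<in>Basis. (z \<bullet> b) *\<^sub>R b)" by (simp add: euclidean_representation)
    also have "\<dots> = (\<Sum>b\<in>Basis. (z \<bullet> b) * f b)"
      using bounded_linear.linear[OF linear] by (simp add: linear_sum linear_scale)
    finally show ?thesis by (simp add: of_real_sum)
  qed
  then have expand: "(\<lambda>t. of_real (f (x t)) :: complex) =
      (\<lambda>t. \<Sum>b\<in>Basis. of_real (x t \<bullet> b) * of_real (f b))"
    by (intro ext)
  show ?case
    unfolding expand
    by (intro trig_polynomial_sum trig_polynomial_mult trig_polynomial_const
        trig_polynomial_inner assms(2)) simp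
qed (simp_all add: trig_polynomial_const trig_polynomial_add trig_polynomial_mult)

lemma trig_polynomial_polynomial_function:
  fixes x :: "real \<Rightarrow> complex ^ 'n" and g :: "complex ^ 'n \<Rightarrow> complex"
  assumes "polynomial_function g" "\<And>j. trig_polynomial (\<lambda>t. x t $ j)"
  shows "trig_polynomial (\<lambda>t. g (x t))"
proof -
  have "real_polynomial_function (\<lambda>z. Re (g z))" "real_polynomial_function (\<lambda>z. Im (g z))"
    using assms(1) bounded_linear_Re bounded_linear_Im
    unfolding polynomial_function_def o_def by blast+
  then have "trig_polynomial (\<lambda>t. of_real (Re (g (x t))) + \<i> * of_real (Im (g (x t))))"
    by (intro trig_polynomial_add trig_polynomial_mult trig_polynomial_const
        trig_polynomial_real_polynomial_function[OF _ assms(2)])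
  moreover have "(\<lambda>t. of_real (Re (g (x t))) + \<i> * of_real (Im (g (x t)))) = (\<lambda>t. g (x t))"
    by (simp add: fun_eq_iff complex_eq_iff)
  ultimately show ?thesis by simp
qed

lemma time_avg_exists_along_trig_curve:
  fixes x :: "real \<Rightarrow> complex ^ 'n" and f :: "complex ^ 'n \<Rightarrow> complex"
  assumes "continuous_on UNIV f" "bounded (range x)" "\<And>j. trig_polynomial (\<lambda>t. x t $ j)"
  shows "\<exists>L. time_avg (\<lambda>t. cis (w * t) * f (x t)) L"
proof (rule time_avg_uniform_approx)
  have cx: "continuous_on UNIV x"
    using continuous_on_vec_lambda[of UNIV "\<lambda>j t. x t $ j"]
    by (simp add: continuous_on_trig_polynomial assms(3))
  then show "continuous_on UNIV (\<lambda>t. cis (w * t) * f (x t))"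
    by (intro continuous_intros continuous_on_compose2[OF assms(1)]) auto
  fix e :: real assume "e > 0"
  have "compact (closure (range x))" using assms(2) by (simp add: compact_closure)
  from Stone_Weierstrass_polynomial_function[OF this continuous_on_subset[OF assms(1) subset_UNIV]
      \<open>e > 0\<close>]
  obtain g where g: "polynomial_function g"
    and approx: "\<forall>z\<in>closure (range x). norm (f z - g z) < e"
    by (elim exE conjE)
  have "trig_polynomial (\<lambda>t. cis (w * t) * g (x t))"
    by (rule trig_polynomial_mult[OF trig_polynomial_cis
          trig_polynomial_polynomial_function[OF g assms(3)]])
  moreover have "norm (cis (w * t) * g (x t) - cis (w * t) * f (x t)) \<le> e" for t
  proof -
    have "norm (f (x t) - g (x t)) < e"
      using approx closure_subset[of "range x"] by blast
    then show ?thesis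
      by (simp add: norm_mult norm_minus_commute right_diff_distrib[symmetric])
  qed
  ultimately show "\<exists>F L. continuous_on UNIV F \<and> time_avg F L \<and>
      (\<forall>t. norm (F t - cis (w * t) * f (x t)) \<le> e)"
    using time_avg_trig_polynomial continuous_on_trig_polynomial by blast
qed

section \<open>Differentiating a time average\<close>

lemma continuous_on_if_locally_lipschitz:
  fixes f :: "'a::euclidean_space \<Rightarrow> 'b::metric_space"
  assumes "locally_lipschitz f"
  shows "continuous_on UNIV f"
proof -
  have "continuous (at x) f" for x
  proof -
    obtain L where "L-lipschitz_on (cball x 1) f"
      using assms[unfolded locally_lipschitz_def, rule_format, OF compact_cball] ..
    then have "continuous_on (cball x 1) f" by (rule lipschitz_on_continuous_on)
    then show ?thesis by (rule continuous_on_interior) auto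
  qed
  then show ?thesis by (simp add: continuous_at_imp_continuous_on)
qed

lemma norm_remainder_le_lipschitz_derivative:
  fixes u :: "'a::real_normed_vector \<Rightarrow> 'b::real_normed_vector"
  assumes deriv: "\<And>z. z \<in> S \<Longrightarrow> (u has_derivative blinfun_apply (D z)) (at z within S)"
    and lip: "C-lipschitz_on S D" and "convex S" "x \<in> S" "y \<in> S"
  shows "norm (u y - u x - D x (y - x)) \<le> C * norm (y - x)^2"
proof -
  have seg: "closed_segment x y \<subseteq> S"
    by (rule closed_segment_subset[OF assms(4,5,3)])
  have "norm (u y - u x - D x (y - x)) \<le> norm (y - x) * (C * norm (y - x))"
  proof (rule differentiable_bound_linearization[where S = "closed_segment x y"
        and f' = "\<lambda>z. blinfun_apply (D z)"])
    show "x + t *\<^sub>R (y - x) \<in> closed_segment x y" if "t \<in> {0..1}" for t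
      using that by (auto simp: in_segment algebra_simps intro!: exI[of _ t])
    show "(u has_derivative blinfun_apply (D z)) (at z within closed_segment x y)"
      if "z \<in> closed_segment x y" for z
      using that seg by (auto intro: has_derivative_subset[OF deriv])
    show "onorm (blinfun_apply (D z) - blinfun_apply (D x)) \<le> C * norm (y - x)"
      if z: "z \<in> closed_segment x y" for z
    proof -
      have "onorm (blinfun_apply (D z) - blinfun_apply (D x)) = dist (D z) (D x)"
        by (simp add: dist_norm norm_blinfun.rep_eq minus_blinfun.rep_eq fun_diff_def)
      also have "\<dots> \<le> C * dist z x"
        using z seg \<open>x \<in> S\<close> by (intro lipschitz_onD[OF lip]) auto
      also have "\<dots> \<le> C * norm (y - x)"
        using z segment_bound1[of z x y] lipschitz_on_nonneg[OF lip]
        by (intro mult_left_mono) (auto simp: dist_norm)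
      finally show "onorm (blinfun_apply (D z) - blinfun_apply (D x)) \<le> C * norm (y - x)" .
    qed
  qed simp
  then show ?thesis by (simp add: power2_eq_square mult_ac)
qed

lemma has_derivative_if_quadratic_remainder:
  fixes f :: "'a::real_normed_vector \<Rightarrow> 'b::real_normed_vector"
  assumes "bounded_linear f'" "d > 0"
    and "\<And>h. norm h < d \<Longrightarrow> norm (f (x + h) - f x - f' h) \<le> C * norm h^2"
  shows "(f has_derivative f') (at x)"
  unfolding has_derivative_at
proof
  have upper: "\<forall>\<^sub>F h in at 0. norm (f (x + h) - f x - f' h) / norm h \<le> \<bar>C\<bar> * norm h"
    unfolding eventually_at
  proof (intro exI[of _ d] conjI ballI impI)
    fix h :: 'a assume h: "h \<noteq> 0 \<and> dist h 0 < d"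
    have "norm (f (x + h) - f x - f' h) \<le> C * norm h^2"
      using assms(3) h by simp
    also have "\<dots> \<le> \<bar>C\<bar> * norm h * norm h"
      by (simp add: power2_eq_square mult.assoc mult_right_mono)
    finally show "norm (f (x + h) - f x - f' h) / norm h \<le> \<bar>C\<bar> * norm h"
      using h by (simp add: divide_le_eq)
  qed (rule assms(2))
  have lim: "((\<lambda>h. \<bar>C\<bar> * norm h) \<longlongrightarrow> 0) (at (0::'a))"
    by (rule tendsto_mult_right_zero[OF tendsto_norm_zero[OF tendsto_ident_at]])
  show "((\<lambda>h. norm (f (x + h) - f x - f' h) / norm h) \<longlongrightarrow> 0) (at 0)"
    by (rule tendsto_sandwich[OF _ upper tendsto_const lim]) simp
qed (rule assms(1))

lemma has_derivative_time_avg: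
  fixes u :: "'a::euclidean_space \<Rightarrow> 'b::euclidean_space" and R :: "real \<Rightarrow> 'a \<Rightarrow> 'a"
  assumes deriv: "\<And>x. (u has_derivative blinfun_apply (D x)) (at x)"
    and lip: "locally_lipschitz D"
    and lin: "\<And>t. linear (R t)" and iso: "\<And>t x. norm (R t x) = norm x"
    and cont: "\<And>x. continuous_on UNIV (\<lambda>t. R t x)"
    and avg_u: "\<And>x. time_avg (\<lambda>t. u (R t x)) (U x)"
    and avg_D: "\<And>v. time_avg (\<lambda>t. D (R t a) (R t v)) (D' v)"
    and "bounded_linear D'"
  shows "(U has_derivative D') (at a)"
proof -
  \<comment> \<open>Each \<open>R t\<close> maps \<open>K\<close> into itself, so one Lipschitz constant of \<open>D\<close> bounds all remainders.\<close>
  define K where "K = cball (0::'a) (norm a + 1)"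
  have "compact K" by (simp add: K_def)
  then obtain C where C: "C-lipschitz_on K D"
    using lip[unfolded locally_lipschitz_def] by blast
  have cu: "continuous_on UNIV u"
    using deriv has_derivative_continuous continuous_at_imp_continuous_on by blast
  have cuR: "continuous_on UNIV (\<lambda>t. u (R t x))" for x
    by (rule continuous_on_compose2[OF cu cont]) auto
  have cDR: "continuous_on UNIV (\<lambda>t. D (R t a) (R t v))" for v
    by (intro continuous_intros continuous_on_compose2[OF continuous_on_if_locally_lipschitz[OF lip]]
        cont) auto
  have remainder: "norm (U (a + h) - U a - D' h) \<le> C * norm h^2" if "norm h < 1" for h
  proof -
    have bound: "norm (u (R t (a + h)) - u (R t a) - D (R t a) (R t h)) \<le> C * norm h^2" for t
    proof -
      have "R t a \<in> K" "R t a + R t h \<in> K"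
        using that norm_triangle_ineq[of "R t a" "R t h"] by (auto simp: K_def iso)
      from norm_remainder_le_lipschitz_derivative[OF has_derivative_at_withinI[OF deriv] C _ this]
      show ?thesis by (simp add: K_def iso linear_add[OF lin])
    qed
    have "time_avg (\<lambda>t. u (R t (a + h)) - u (R t a) - D (R t a) (R t h)) (U (a + h) - U a - D' h)"
      by (rule time_avg_diff[OF time_avg_diff[OF avg_u avg_u cuR cuR] avg_D
            continuous_on_diff[OF cuR cuR] cDR])
    then show ?thesis
      by (rule time_avg_norm_le[OF _ continuous_on_diff[OF continuous_on_diff[OF cuR cuR] cDR]
            bound])
  qed
  show ?thesis
    by (rule has_derivative_if_quadratic_remainder[OF \<open>bounded_linear D'\<close> zero_less_one remainder])
qed

lemma locally_lipschitz_if_dist_le: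
  assumes "locally_lipschitz f" "0 \<le> c" "\<And>x y. dist (g x) (g y) \<le> c * dist (f x) (f y)"
  shows "locally_lipschitz g"
  unfolding locally_lipschitz_def
proof (intro allI impI)
  fix K :: "'a set" assume "compact K"
  then obtain L where L: "L-lipschitz_on K f"
    using assms(1) unfolding locally_lipschitz_def by blast
  have "(c * L)-lipschitz_on K g"
  proof (rule lipschitz_onI)
    fix x y assume "x \<in> K" "y \<in> K"
    have "dist (g x) (g y) \<le> c * dist (f x) (f y)" by (rule assms(3))
    also have "\<dots> \<le> c * (L * dist x y)"
      using lipschitz_onD[OF L \<open>x \<in> K\<close> \<open>y \<in> K\<close>] assms(2) by (rule mult_left_mono)
    finally show "dist (g x) (g y) \<le> c * L * dist x y" by (simp add: mult.assoc)
  qed (use assms(2) lipschitz_on_nonneg[OF L] in simp)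
  then show "\<exists>L. L-lipschitz_on K g" ..
qed

lemma locally_lipschitz_vec:
  fixes f :: "'a::metric_space \<Rightarrow> 'b::metric_space ^ 'n"
  assumes "\<And>j. locally_lipschitz (\<lambda>x. f x $ j)"
  shows "locally_lipschitz f"
  unfolding locally_lipschitz_def
proof (intro allI impI)
  fix K :: "'a set" assume "compact K"
  then have "\<forall>j. \<exists>L. L-lipschitz_on K (\<lambda>x. f x $ j)"
    using assms unfolding locally_lipschitz_def by blast
  then obtain L where L: "\<And>j. (L j)-lipschitz_on K (\<lambda>x. f x $ j)" by metis
  have "(\<Sum>j\<in>UNIV. L j)-lipschitz_on K f"
  proof (rule lipschitz_onI)
    fix x y assume "x \<in> K" "y \<in> K"
    have "dist (f x) (f y) \<le> (\<Sum>j\<in>UNIV. dist (f x $ j) (f y $ j))"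
      unfolding dist_vec_def by (rule L2_set_le_sum) simp
    also have "\<dots> \<le> (\<Sum>j\<in>UNIV. L j * dist x y)"
      by (intro sum_mono lipschitz_onD[OF L \<open>x \<in> K\<close> \<open>y \<in> K\<close>])
    finally show "dist (f x) (f y) \<le> (\<Sum>j\<in>UNIV. L j) * dist x y"
      by (simp add: sum_distrib_right)
  qed (simp add: sum_nonneg lipschitz_on_nonneg[OF L])
  then show "\<exists>L. L-lipschitz_on K f" ..
qed

lemma locally_lipschitz_time_avg:
  fixes F :: "'a::euclidean_space \<Rightarrow> real \<Rightarrow> 'b::euclidean_space"
  assumes "\<And>x. time_avg (F x) (G x)" "\<And>x. continuous_on UNIV (F x)"
    and "\<And>r. \<exists>L. \<forall>t. L-lipschitz_on (cball 0 r) (\<lambda>x. F x t)"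
  shows "locally_lipschitz G"
  unfolding locally_lipschitz_def
proof (intro allI impI)
  fix K :: "'a set" assume "compact K"
  then obtain r where "K \<subseteq> ball 0 r"
    using bounded_subset_ballD[OF compact_imp_bounded] by blast
  then have K: "K \<subseteq> cball 0 r" by auto
  obtain L where L: "\<And>t. L-lipschitz_on (cball 0 r) (\<lambda>x. F x t)"
    using assms(3) by blast
  have "L-lipschitz_on (cball 0 r) G"
  proof (rule lipschitz_onI)
    fix x y :: 'a assume "x \<in> cball 0 r" "y \<in> cball 0 r"
    then have "norm (F x t - F y t) \<le> L * dist x y" for t
      using lipschitz_onD[OF L, of x y t] by (simp add: dist_norm)
    then show "dist (G x) (G y) \<le> L * dist x y"
      unfolding dist_norm
      by (rule time_avg_norm_le[OF time_avg_diff[OF assms(1,1,2,2)]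
            continuous_on_diff[OF assms(2,2)]])
  qed (rule lipschitz_on_nonneg[OF L])
  then show "\<exists>L. L-lipschitz_on K G"
    using lipschitz_on_subset[OF _ K] by blast
qed

section \<open>Wirtinger derivatives of real functions\<close>

definition dbar :: "(complex ^ 'n \<Rightarrow> complex) \<Rightarrow> complex ^ 'n \<Rightarrow> complex ^ 'n" where
  "dbar u a = (\<chi> j. dzbar u j a)"

lemma vec_eq_sum_Re_Im_axis:
  fixes v :: "complex ^ 'n"
  shows "v = (\<Sum>j\<in>UNIV. Re (v $ j) *\<^sub>R axis j 1 + Im (v $ j) *\<^sub>R axis j \<i>)"
  by (simp add: vec_eq_iff sum_component axis_def complex_eq_iff if_distrib cong: if_cong)

text \<open>For real \<open>u\<close>, \<open>\<partial>u/\<partial>z\<^sub>j\<close> is the conjugate of \<open>\<partial>u/\<partial>z\<^sup>-\<^sub>j\<close>, so \<open>du = 2 Re \<Sum>\<^sub>j \<partial>u/\<partial>z\<^sup>-\<^sub>j dz\<^sup>-\<^sub>j\<close>,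
  and \<open>Re (cnj v * w)\<close> is the real inner product of \<open>v\<close> and \<open>w\<close>.\<close>

lemma has_derivative_real_valued_eq_dbar:
  fixes u :: "complex ^ 'n \<Rightarrow> complex"
  assumes deriv: "(u has_derivative u') (at a)" and real: "\<And>z. Im (u z) = 0"
  shows "u' v = of_real (2 * (dbar u a \<bullet> v))"
proof -
  have fd: "frechet_derivative u (at a) = u'"
    using frechet_derivative_at[OF deriv] by simp
  have "((\<lambda>z. Im (u z)) has_derivative (\<lambda>w. Im (u' w))) (at a)"
    by (rule bounded_linear.has_derivative[OF bounded_linear_Im deriv])
  moreover have "((\<lambda>z. Im (u z)) has_derivative (\<lambda>w. 0)) (at a)"
    using real by simp
  ultimately have "(\<lambda>w. Im (u' w)) = (\<lambda>w. 0)"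
    by (rule has_derivative_unique)
  then have Im0: "Im (u' w) = 0" for w
    by (simp add: fun_eq_iff)
  have lin: "linear u'" by (rule has_derivative_linear[OF deriv])
  have "u' v = u' (\<Sum>j\<in>UNIV. Re (v $ j) *\<^sub>R axis j 1 + Im (v $ j) *\<^sub>R axis j \<i>)"
    by (rule arg_cong[OF vec_eq_sum_Re_Im_axis])
  also have "\<dots> = (\<Sum>j\<in>UNIV. Re (v $ j) *\<^sub>R u' (axis j 1) + Im (v $ j) *\<^sub>R u' (axis j \<i>))"
    by (simp add: linear_sum[OF lin] linear_add[OF lin] linear_scale[OF lin])
  also have "\<dots> = of_real (2 * (dbar u a \<bullet> v))"
    by (simp add: dbar_def dzbar_def dx_def dy_def fd inner_vec_def inner_complex_def
        complex_eq_iff Im0 of_real_sum sum_distrib_left algebra_simps)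
  finally show ?thesis .
qed

lemma bounded_linear_inner_form: "bounded_linear (\<lambda>v. complex_of_real (2 * (m \<bullet> v)))"
  by (intro bounded_linear_compose[OF bounded_linear_of_real]
      bounded_linear_const_mult bounded_linear_inner_right)

lemma dzbar_dz_if_has_derivative_inner_form:
  fixes U :: "complex ^ 'n \<Rightarrow> complex"
  assumes "(U has_derivative (\<lambda>v. of_real (2 * (m \<bullet> v)))) (at a)"
  shows "dzbar U j a = m $ j" "dz U j a = cnj (m $ j)"
proof -
  have "frechet_derivative U (at a) = (\<lambda>v. of_real (2 * (m \<bullet> v)))"
    using frechet_derivative_at[OF assms] by simp
  then have "dx U j a = of_real (2 * Re (m $ j))" "dy U j a = of_real (2 * Im (m $ j))"
    by (simp_all add: dx_def dy_def inner_axis)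
  then show "dzbar U j a = m $ j" "dz U j a = cnj (m $ j)"
    by (simp_all add: dzbar_def dz_def complex_eq_iff)
qed

lemma dist_inner_forms_le:
  fixes A B :: "(complex ^ 'n) \<Rightarrow>\<^sub>L complex"
  assumes "\<And>v. A v = of_real (2 * (m \<bullet> v))" "\<And>v. B v = of_real (2 * (n \<bullet> v))"
  shows "dist A B \<le> 2 * dist m n"
  unfolding dist_norm
proof (rule norm_blinfun_bound)
  fix v
  have "(A - B) v = of_real (2 * ((m - n) \<bullet> v))"
    by (simp add: blinfun.diff_left assms inner_diff_left right_diff_distrib)
  then have "norm ((A - B) v) = 2 * \<bar>(m - n) \<bullet> v\<bar>"
    by (simp add: abs_mult)
  also have "\<dots> \<le> 2 * norm (m - n) * norm v"
    using Cauchy_Schwarz_ineq2[of "m - n" v] by simp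
  finally show "norm ((A - B) v) \<le> 2 * norm (m - n) * norm v" .
qed simp

lemma C11loc_if_has_derivative_inner_form:
  fixes U :: "complex ^ 'n \<Rightarrow> complex"
  assumes deriv: "\<And>a. (U has_derivative (\<lambda>v. of_real (2 * (m a \<bullet> v)))) (at a)"
    and lip: "locally_lipschitz m"
  shows "C11loc U"
  unfolding C11loc_def C1_def
proof (intro conjI allI exI)
  define D where "D a = Blinfun (\<lambda>v. complex_of_real (2 * (m a \<bullet> v)))" for a
  have D: "blinfun_apply (D a) = (\<lambda>v. complex_of_real (2 * (m a \<bullet> v)))" for a
    unfolding D_def by (rule bounded_linear_Blinfun_apply[OF bounded_linear_inner_form])
  show "(U has_derivative blinfun_apply (D a)) (at a)" for a
    unfolding D by (rule deriv)
  have "locally_lipschitz D"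
    by (rule locally_lipschitz_if_dist_le[OF lip, of 2]) (simp_all add: dist_inner_forms_le D)
  then show "continuous_on UNIV D" by (rule continuous_on_if_locally_lipschitz)
next
  fix j
  have dzbar: "dzbar U j = (\<lambda>a. m a $ j)" and dz: "dz U j = (\<lambda>a. cnj (m a $ j))"
    using dzbar_dz_if_has_derivative_inner_form[OF deriv] by auto
  have nth: "dist (m x $ j) (m y $ j) \<le> 1 * dist (m x) (m y)" for x y
    using Finite_Cartesian_Product.norm_nth_le[of "m x - m y" j] by (simp add: dist_norm)
  show "locally_lipschitz (dzbar U j)"
    unfolding dzbar by (rule locally_lipschitz_if_dist_le[OF lip _ nth]) simp
  have "dist (cnj (m x $ j)) (cnj (m y $ j)) = dist (m x $ j) (m y $ j)" for x y
    by (simp add: dist_norm flip: complex_cnj_diff)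
  then show "locally_lipschitz (dz U j)"
    unfolding dz using nth by (intro locally_lipschitz_if_dist_le[OF lip, of 1]) simp_all
qed

lemma continuous_on_if_C11loc:
  assumes "C11loc u"
  shows "continuous_on UNIV u"
proof -
  from assms obtain D where "\<And>z. (u has_derivative blinfun_apply (D z)) (at z)"
    unfolding C11loc_def C1_def by blast
  then show ?thesis
    using has_derivative_continuous continuous_at_imp_continuous_on by blast
qed

lemma continuous_on_if_C11loc_of_real:
  assumes "C11loc (\<lambda>z. complex_of_real (h z))"
  shows "continuous_on UNIV h"
  using continuous_on_Re[OF continuous_on_if_C11loc[OF assms]] by simp

lemma locally_lipschitz_dbar:
  assumes "C11loc u"
  shows "locally_lipschitz (dbar u)"
  unfolding dbar_def using assms by (intro locally_lipschitz_vec) (simp add: C11loc_def)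

section \<open>The torus flow\<close>

lemma Phi_nth: "Phi w a $ j = cis (w $ j) * a $ j"
  by (simp add: Phi_def cis_conv_exp)

lemma norm_Phi [simp]: "norm (Phi w a) = norm a"
  by (simp add: norm_vec_def Phi_nth norm_mult)

lemma linear_Phi: "linear (Phi w)"
  by (rule linearI) (simp_all add: vec_eq_iff Phi_nth algebra_simps scaleR_conv_of_real)

lemma inner_Phi_left: "Phi w m \<bullet> v = m \<bullet> Phi (- w) v"
  by (simp add: inner_vec_def inner_complex_def Phi_nth cis.sel algebra_simps)

lemma continuous_on_Phi_scaled: "continuous_on S (\<lambda>t. Phi (t *\<^sub>R w) a)"
  unfolding Phi_def by (intro continuous_on_vec_lambda continuous_intros)

lemma trig_polynomial_flow_nth: "trig_polynomial (\<lambda>t. Phi (- (t *\<^sub>R \<Lambda>)) a $ j)"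
proof -
  have "(\<lambda>t. Phi (- (t *\<^sub>R \<Lambda>)) a $ j) = (\<lambda>t. a $ j * cis ((- \<Lambda> $ j) * t))"
    by (simp add: fun_eq_iff Phi_nth mult.commute)
  then show ?thesis
    using trig_polynomial_mult[OF trig_polynomial_const trig_polynomial_cis, of "a $ j" "- \<Lambda> $ j"]
    by simp
qed

lemma bounded_range_flow: "bounded (range (\<lambda>t. Phi (- (t *\<^sub>R \<Lambda>)) a))"
  by (auto simp: bounded_iff)

lemma continuous_on_flow: "continuous_on S (\<lambda>t. Phi (- (t *\<^sub>R \<Lambda>)) a)"
  using continuous_on_Phi_scaled[of S "- \<Lambda>" a] by simp

lemma continuous_on_conjugated_flow:
  fixes g :: "complex ^ 'n \<Rightarrow> complex ^ 'n"
  assumes "continuous_on UNIV g"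
  shows "continuous_on S (\<lambda>t. Phi (t *\<^sub>R \<Lambda>) (g (Phi (- (t *\<^sub>R \<Lambda>)) a)))"
  unfolding Phi_def[of "_ *\<^sub>R \<Lambda>"]
  by (intro continuous_on_vec_lambda continuous_intros continuous_on_compose2[OF assms]
      continuous_on_flow) auto

lemma time_avg_exists_flow:
  fixes f :: "complex ^ 'n \<Rightarrow> real"
  assumes "continuous_on UNIV f"
  shows "\<exists>L. time_avg (\<lambda>t. f (Phi (- (t *\<^sub>R \<Lambda>)) a)) L"
proof -
  have "continuous_on UNIV (\<lambda>t. f (Phi (- (t *\<^sub>R \<Lambda>)) a))"
    by (rule continuous_on_compose2[OF assms continuous_on_flow subset_UNIV])
  then have cont: "continuous_on UNIV (\<lambda>t. complex_of_real (f (Phi (- (t *\<^sub>R \<Lambda>)) a)))"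
    by (rule continuous_on_of_real)
  have "continuous_on UNIV (\<lambda>z. complex_of_real (f z))"
    by (rule continuous_on_of_real[OF assms])
  from time_avg_exists_along_trig_curve[OF this bounded_range_flow trig_polynomial_flow_nth, of 0]
  obtain L where "time_avg (\<lambda>t. complex_of_real (f (Phi (- (t *\<^sub>R \<Lambda>)) a))) L"
    by auto
  from time_avg_bounded_linear[OF this cont bounded_linear_Re] show ?thesis
    by auto
qed

lemma time_avg_exists_conjugated_flow:
  fixes g :: "complex ^ 'n \<Rightarrow> complex ^ 'n"
  assumes "continuous_on UNIV g"
  shows "\<exists>L. time_avg (\<lambda>t. Phi (t *\<^sub>R \<Lambda>) (g (Phi (- (t *\<^sub>R \<Lambda>)) a))) L"
proof -
  have "continuous_on UNIV (\<lambda>z. g z $ j)" for j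
    by (intro continuous_intros assms)
  then have "\<forall>j. \<exists>L. time_avg (\<lambda>t. cis (\<Lambda> $ j * t) * g (Phi (- (t *\<^sub>R \<Lambda>)) a) $ j) L"
    using time_avg_exists_along_trig_curve[OF _ bounded_range_flow trig_polynomial_flow_nth]
    by blast
  then obtain L
    where L: "\<And>j. time_avg (\<lambda>t. cis (\<Lambda> $ j * t) * g (Phi (- (t *\<^sub>R \<Lambda>)) a) $ j) (L j)"
    by metis
  have "time_avg (\<lambda>t. Phi (t *\<^sub>R \<Lambda>) (g (Phi (- (t *\<^sub>R \<Lambda>)) a))) (\<chi> j. L j)"
  proof (rule time_avg_vec)
    show "time_avg (\<lambda>t. Phi (t *\<^sub>R \<Lambda>) (g (Phi (- (t *\<^sub>R \<Lambda>)) a)) $ j) ((\<chi> j. L j) $ j)" for j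
      using L[of j] by (simp add: Phi_nth mult.commute)
  qed (rule continuous_on_conjugated_flow[OF assms])
  then show ?thesis by blast
qed

lemma locally_lipschitz_time_avg_conjugated_flow:
  fixes g :: "complex ^ 'n \<Rightarrow> complex ^ 'n"
  assumes lip: "locally_lipschitz g"
    and avg: "\<And>a. time_avg (\<lambda>t. Phi (t *\<^sub>R \<Lambda>) (g (Phi (- (t *\<^sub>R \<Lambda>)) a))) (G a)"
  shows "locally_lipschitz G"
proof (rule locally_lipschitz_time_avg[OF avg])
  show "continuous_on UNIV (\<lambda>t. Phi (t *\<^sub>R \<Lambda>) (g (Phi (- (t *\<^sub>R \<Lambda>)) a)))" for a
    by (rule continuous_on_conjugated_flow[OF continuous_on_if_locally_lipschitz[OF lip]])
  fix r :: real
  obtain L where L: "L-lipschitz_on (cball 0 r) g"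
    using lip[unfolded locally_lipschitz_def] compact_cball by blast
  have "L-lipschitz_on (cball 0 r) (\<lambda>a. Phi (t *\<^sub>R \<Lambda>) (g (Phi (- (t *\<^sub>R \<Lambda>)) a)))" for t
  proof (rule lipschitz_onI)
    fix x y :: "complex ^ 'n" assume "x \<in> cball 0 r" "y \<in> cball 0 r"
    then have "dist (g (Phi (- (t *\<^sub>R \<Lambda>)) x)) (g (Phi (- (t *\<^sub>R \<Lambda>)) y))
        \<le> L * dist (Phi (- (t *\<^sub>R \<Lambda>)) x) (Phi (- (t *\<^sub>R \<Lambda>)) y)"
      by (intro lipschitz_onD[OF L]) auto
    then show "dist (Phi (t *\<^sub>R \<Lambda>) (g (Phi (- (t *\<^sub>R \<Lambda>)) x)))
        (Phi (t *\<^sub>R \<Lambda>) (g (Phi (- (t *\<^sub>R \<Lambda>)) y))) \<le> L * dist x y"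
      by (simp add: dist_norm flip: linear_diff[OF linear_Phi])
  qed (rule lipschitz_on_nonneg[OF L])
  then show "\<exists>L. \<forall>t. L-lipschitz_on (cball 0 r) (\<lambda>a. Phi (t *\<^sub>R \<Lambda>) (g (Phi (- (t *\<^sub>R \<Lambda>)) a)))"
    by blast
qed

lemma has_derivative_time_avg_flow:
  fixes h :: "complex ^ 'n \<Rightarrow> real"
  defines "u \<equiv> \<lambda>z. complex_of_real (h z)"
  assumes "C11loc u"
    and avg_h: "\<And>a. time_avg (\<lambda>t. h (Phi (- (t *\<^sub>R \<Lambda>)) a)) (hav a)"
    and avg_dbar: "\<And>a. time_avg (\<lambda>t. Phi (t *\<^sub>R \<Lambda>) (dbar u (Phi (- (t *\<^sub>R \<Lambda>)) a))) (G a)"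
  shows "((\<lambda>z. complex_of_real (hav z)) has_derivative (\<lambda>v. of_real (2 * (G a \<bullet> v)))) (at a)"
proof -
  from \<open>C11loc u\<close> obtain D where D: "\<And>z. (u has_derivative blinfun_apply (D z)) (at z)"
    unfolding C11loc_def C1_def by blast
  have D_eq: "D z v = of_real (2 * (dbar u z \<bullet> v))" for z v
    by (rule has_derivative_real_valued_eq_dbar[OF D]) (simp add: u_def)
  have cont_dbar: "continuous_on UNIV (dbar u)"
    by (rule continuous_on_if_locally_lipschitz[OF locally_lipschitz_dbar[OF \<open>C11loc u\<close>]])
  have lip_D: "locally_lipschitz D"
    by (rule locally_lipschitz_if_dist_le[OF locally_lipschitz_dbar[OF \<open>C11loc u\<close>], of 2])
      (simp_all add: dist_inner_forms_le D_eq)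
  have "continuous_on UNIV h"
    using \<open>C11loc u\<close> unfolding u_def by (rule continuous_on_if_C11loc_of_real)
  then have cont_h: "continuous_on UNIV (\<lambda>t. h (Phi (- (t *\<^sub>R \<Lambda>)) x))" for x
    by (rule continuous_on_compose2[OF _ continuous_on_flow subset_UNIV])
  have avg_u: "time_avg (\<lambda>t. u (Phi (- (t *\<^sub>R \<Lambda>)) x)) (of_real (hav x))" for x
    unfolding u_def by (rule time_avg_bounded_linear[OF avg_h cont_h bounded_linear_of_real])
  have "time_avg (\<lambda>t. of_real (2 * (Phi (t *\<^sub>R \<Lambda>) (dbar u (Phi (- (t *\<^sub>R \<Lambda>)) a)) \<bullet> v)))
      (complex_of_real (2 * (G a \<bullet> v)))" for v
  proof (rule time_avg_bounded_linear[OF avg_dbar])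
    show "continuous_on UNIV (\<lambda>t. Phi (t *\<^sub>R \<Lambda>) (dbar u (Phi (- (t *\<^sub>R \<Lambda>)) a)))"
      by (rule continuous_on_conjugated_flow[OF cont_dbar])
    show "bounded_linear (\<lambda>m. complex_of_real (2 * (m \<bullet> v)))"
      by (intro bounded_linear_compose[OF bounded_linear_of_real]
          bounded_linear_const_mult bounded_linear_inner_left)
  qed
  then have avg_D: "time_avg (\<lambda>t. D (Phi (- (t *\<^sub>R \<Lambda>)) a) (Phi (- (t *\<^sub>R \<Lambda>)) v))
      (of_real (2 * (G a \<bullet> v)))" for v
    by (simp add: D_eq inner_Phi_left)
  show ?thesis
    by (rule has_derivative_time_avg[OF D lip_D linear_Phi norm_Phi continuous_on_flow avg_u avg_D
          bounded_linear_inner_form])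
qed

theorem theorem5p1:
  fixes \<Lambda> :: "real^'n" and h :: "complex^'n \<Rightarrow> real"
    and P :: "complex^'n \<Rightarrow> complex^'n"
  assumes "\<forall>j. \<Lambda> $ j \<noteq> 0"
    and "C11loc (\<lambda>z. complex_of_real (h z))"
    and "\<forall>a. P a = (\<chi> j. 2 * \<i> * dzbar (\<lambda>z. complex_of_real (h z)) j a)"
  shows "\<exists>hav :: complex^'n \<Rightarrow> real.
           (\<forall>a. time_avg (\<lambda>t. h (Phi (- (t *\<^sub>R \<Lambda>)) a)) (hav a)) \<and>
           C11loc (\<lambda>z. complex_of_real (hav z)) \<and>
           (\<forall>a. time_avg (\<lambda>t. Phi (t *\<^sub>R \<Lambda>) (P (Phi (- (t *\<^sub>R \<Lambda>)) a)))
                   (\<chi> j. 2 * \<i> * dzbar (\<lambda>z. complex_of_real (hav z)) j a))"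
proof -
  define u where "u = (\<lambda>z. complex_of_real (h z))"
  have cont: "continuous_on UNIV (dbar u)"
    using assms(2) unfolding u_def
    by (rule continuous_on_if_locally_lipschitz[OF locally_lipschitz_dbar])
  obtain G where G: "\<And>a. time_avg (\<lambda>t. Phi (t *\<^sub>R \<Lambda>) (dbar u (Phi (- (t *\<^sub>R \<Lambda>)) a))) (G a)"
    using time_avg_exists_conjugated_flow[OF cont] by metis
  obtain hav where hav: "\<And>a. time_avg (\<lambda>t. h (Phi (- (t *\<^sub>R \<Lambda>)) a)) (hav a)"
    using time_avg_exists_flow[OF continuous_on_if_C11loc_of_real[OF assms(2)]] by metis
  have deriv: "((\<lambda>z. complex_of_real (hav z)) has_derivative (\<lambda>v. of_real (2 * (G a \<bullet> v))))
      (at a)" for a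
    using has_derivative_time_avg_flow[OF assms(2) hav G[unfolded u_def]] .
  have P: "Phi (t *\<^sub>R \<Lambda>) (P (Phi (- (t *\<^sub>R \<Lambda>)) a)) =
      (\<chi> j. 2 * \<i> * Phi (t *\<^sub>R \<Lambda>) (dbar u (Phi (- (t *\<^sub>R \<Lambda>)) a)) $ j)" for a t
    by (simp add: vec_eq_iff assms(3) Phi_nth dbar_def u_def mult_ac)
  show ?thesis
  proof (intro exI[of _ hav] conjI allI)
    show "C11loc (\<lambda>z. complex_of_real (hav z))"
      using assms(2) unfolding u_def
      by (intro C11loc_if_has_derivative_inner_form[OF deriv]
          locally_lipschitz_time_avg_conjugated_flow[OF locally_lipschitz_dbar G[unfolded u_def]])
    show "time_avg (\<lambda>t. Phi (t *\<^sub>R \<Lambda>) (P (Phi (- (t *\<^sub>R \<Lambda>)) a)))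
        (\<chi> j. 2 * \<i> * dzbar (\<lambda>z. complex_of_real (hav z)) j a)" for a
      using time_avg_vec_mult_left[OF G continuous_on_conjugated_flow[OF cont]]
      by (simp add: P dzbar_dz_if_has_derivative_inner_form(1)[OF deriv])
  qed (rule hav)
qed

end
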